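(* Let $1\le r\le n$ and let $p=(p_1,\dots,p_n)$ be a size vector. If $A,B\subseteq S_p$ form a maximal pair of $r$-cross-intersecting families, then each of $A$, $B$ determines the other; in particular $A$ and $B$ have the same set of relevant coordinates. Moreover, if $A$ is the Hamming ball of radius $l$ around $x_0\in S_p$ in a set of coordinates $T\subseteq[n]$, then $|T|\ge l+r$, $B$ is the Hamming ball of radius $|T|-l-r$ around $x_0$ in the coordinates $T$, $p_i\le p_j$ holds for every $i\in T$ and $j\in[n]\setminus T$, and $\big||T|-2l-r\big|\le 1$.
   Context: $[m]=\{1,\dots,m\}$. A size vector is a sequence of integers $p=(p_1,\dots,p_n)$ with $p_i\ge 2$ for all $i$; $S_p=[p_1]\times\cdots\times[p_n]$. Two vectors $x,y\in S_p$ are $r$-intersecting if $|\{i: x_i=y_i\}|\ge r$; families $A,B\subseteq S_p$ are $r$-cross-intersecting if every $x\in A$, $y\in B$ are $r$-intersecting. A pair $(A,B)$ of $r$-cross-intersecting families in $S_p$ is maximal if it maximizes $|A|\cdot|B|$ among all $r$-cross-intersecting pairs in $S_p$. A coordinate $i$ is irrelevant for $A\subseteq S_p$ if whenever two elements of $S_p$ differ only in coordinate $i$ and one lies in $A$, so does the other; otherwise $i$ is relevant for $A$. For $T\subseteq[n]$, $x_0\in S_p$ and $0\le k\le |T|$, the Hamming ball of radius $k$ around $x_0$ in the coordinates $T$ is $\{x\in S_p: |\{i\in T: x_i\ne (x_0)_i\}|\le k\}$. *)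

theory Defs
  imports "HOL-Library.FuncSet"
begin

text \<open>Vectors of S_p are functions nat => nat, restricted (PiE) to coordinates 1..n,
  with x i in {1..p i}. The size vector p is a function nat => nat, only its values
  on 1..n matter.\<close>

definition Sp :: "nat \<Rightarrow> (nat \<Rightarrow> nat) \<Rightarrow> (nat \<Rightarrow> nat) set" where
  "Sp n p = PiE {1..n} (\<lambda>i. {1..p i})"

definition size_vector :: "nat \<Rightarrow> (nat \<Rightarrow> nat) \<Rightarrow> bool" where
  "size_vector n p \<longleftrightarrow> (\<forall>i\<in>{1..n}. p i \<ge> 2)"

definition r_intersecting :: "nat \<Rightarrow> nat \<Rightarrow> (nat \<Rightarrow> nat) \<Rightarrow> (nat \<Rightarrow> nat) \<Rightarrow> bool" where
  "r_intersecting n r x y \<longleftrightarrow> card {i\<in>{1..n}. x i = y i} \<ge> r"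

definition r_cross_intersecting ::
  "nat \<Rightarrow> nat \<Rightarrow> (nat \<Rightarrow> nat) set \<Rightarrow> (nat \<Rightarrow> nat) set \<Rightarrow> bool" where
  "r_cross_intersecting n r A B \<longleftrightarrow> (\<forall>x\<in>A. \<forall>y\<in>B. r_intersecting n r x y)"

definition maximal_pair ::
  "nat \<Rightarrow> (nat \<Rightarrow> nat) \<Rightarrow> nat \<Rightarrow> (nat \<Rightarrow> nat) set \<Rightarrow> (nat \<Rightarrow> nat) set \<Rightarrow> bool" where
  "maximal_pair n p r A B \<longleftrightarrow>
     A \<subseteq> Sp n p \<and> B \<subseteq> Sp n p \<and> r_cross_intersecting n r A B \<and>
     (\<forall>A' B'. A' \<subseteq> Sp n p \<longrightarrow> B' \<subseteq> Sp n p \<longrightarrow> r_cross_intersecting n r A' B' \<longrightarrow>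
        card A' * card B' \<le> card A * card B)"

definition irrelevant_coord ::
  "nat \<Rightarrow> (nat \<Rightarrow> nat) \<Rightarrow> (nat \<Rightarrow> nat) set \<Rightarrow> nat \<Rightarrow> bool" where
  "irrelevant_coord n p A i \<longleftrightarrow>
     (\<forall>x\<in>Sp n p. \<forall>y\<in>Sp n p. (\<forall>j\<in>{1..n}. j \<noteq> i \<longrightarrow> x j = y j) \<longrightarrow> x \<in> A \<longrightarrow> y \<in> A)"

definition relevant_coords ::
  "nat \<Rightarrow> (nat \<Rightarrow> nat) \<Rightarrow> (nat \<Rightarrow> nat) set \<Rightarrow> nat set" where
  "relevant_coords n p A = {i\<in>{1..n}. \<not> irrelevant_coord n p A i}"

definition hamming_ball ::
  "nat \<Rightarrow> (nat \<Rightarrow> nat) \<Rightarrow> nat set \<Rightarrow> (nat \<Rightarrow> nat) \<Rightarrow> nat \<Rightarrow> (nat \<Rightarrow> nat) set" where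
  "hamming_ball n p T x0 k = {x\<in>Sp n p. card {i\<in>T. x i \<noteq> x0 i} \<le> k}"

end

theory Submission
  imports Defs Complex_Main
begin

(*
  For a family A let N(A), its cross-neighbourhood, be the set of vectors of S_p that
  r-intersect every member of A.  In a maximal pair (A, B) we have B = N(A) and A = N(B):
  enlarging B to N(A) keeps the pair cross-intersecting, so maximality forces equality.
  Hence each family determines the other, and since N preserves irrelevance of a
  coordinate, A and B have the same relevant coordinates.

  If A is the Hamming ball of radius l in the coordinates T, then N(A) is the concentric
  ball of radius |T| - l - r (empty unless |T| >= l + r).  Any two concentric balls with
  radii l', m' in coordinates T' satisfying l' + m' + r <= |T'| are cross-intersecting, so a
  maximal pair dominates all of them.  Counting gives |ball| = W_T(k) * prod_{j not in T} p_j,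
  where the weight W_T(k) sums prod_{i in S} (p_i - 1) over all S subset T with |S| <= k.
  Swapping i in T for j outside T with p_j < p_i enlarges both balls, which yields p_i <= p_j;
  and W_T is strictly log-concave, so radii differing by 2 or more could be moved towards
  each other to enlarge the product, which yields the balance |(|T| - l - r) - l| <= 1.
*)

lemma Sp_finite: "finite (Sp n p)"
  unfolding Sp_def by (simp add: finite_PiE)

lemma r_intersecting_sym: "r_intersecting n r x y = r_intersecting n r y x"
proof -
  have "{i\<in>{1..n}. x i = y i} = {i\<in>{1..n}. y i = x i}" by auto
  thus ?thesis unfolding r_intersecting_def by simp
qed

lemma r_cross_intersecting_sym: "r_cross_intersecting n r A B = r_cross_intersecting n r B A"
  unfolding r_cross_intersecting_def using r_intersecting_sym by blast

text \<open>Every coordinate has at least two values, so each value has a different one in its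
  range; this fixed choice lets us build vectors disagreeing with a given one.\<close>

definition other_value :: "nat \<Rightarrow> nat" where
  "other_value v = (if v = 1 then 2 else 1)"

lemma other_value: "v \<in> {1..m} \<Longrightarrow> 2 \<le> m \<Longrightarrow> other_value v \<in> {1..m} \<and> other_value v \<noteq> v"
  by (auto simp: other_value_def)

lemma card_filter_split: "finite T \<Longrightarrow> card {i\<in>T. Q i} + card {i\<in>T. \<not> Q i} = card T"
proof -
  assume "finite T"
  moreover have "{i\<in>T. Q i} \<union> {i\<in>T. \<not> Q i} = T" "{i\<in>T. Q i} \<inter> {i\<in>T. \<not> Q i} = {}" by auto
  ultimately show ?thesis using card_Un_disjoint[of "{i\<in>T. Q i}" "{i\<in>T. \<not> Q i}"] by auto
qed

section \<open>Maximal pairs determine each other\<close>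

text \<open>The cross-neighbourhood of A: all vectors that r-intersect every member of A.  It is the
  largest partner of A in an r-cross-intersecting pair.\<close>

definition cross_nbhd :: "nat \<Rightarrow> nat \<Rightarrow> (nat \<Rightarrow> nat) \<Rightarrow> (nat \<Rightarrow> nat) set \<Rightarrow> (nat \<Rightarrow> nat) set" where
  "cross_nbhd n r p A = {y\<in>Sp n p. \<forall>x\<in>A. r_intersecting n r x y}"

lemma maximal_pairD:
  "maximal_pair n p r A B \<Longrightarrow> A' \<subseteq> Sp n p \<Longrightarrow> B' \<subseteq> Sp n p \<Longrightarrow>
   r_cross_intersecting n r A' B' \<Longrightarrow> card A' * card B' \<le> card A * card B"
  unfolding maximal_pair_def by simp

lemma maximal_pair_sym: "maximal_pair n p r A B \<Longrightarrow> maximal_pair n p r B A"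
  unfolding maximal_pair_def using r_cross_intersecting_sym by (metis mult.commute)

text \<open>A maximal pair beats the pair of singletons of one vector, so both families are nonempty.\<close>

lemma maximal_pair_card_pos:
  assumes "maximal_pair n p r A B" "size_vector n p" "r \<le> n"
  shows "0 < card A * card B"
proof -
  let ?x = "restrict (\<lambda>i. 1) {1..n}"
  have "?x \<in> Sp n p" using assms(2) unfolding Sp_def size_vector_def by auto
  moreover have "{i\<in>{1..n}. ?x i = ?x i} = {1..n}" by auto
  hence "r_cross_intersecting n r {?x} {?x}"
    using assms(3) unfolding r_cross_intersecting_def r_intersecting_def by simp
  ultimately show ?thesis using maximal_pairD[OF assms(1), of "{?x}" "{?x}"] by simp
qed

lemma maximal_pair_cross_nbhd:
  assumes max: "maximal_pair n p r A B" and "size_vector n p" "r \<le> n"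
  shows "B = cross_nbhd n r p A"
proof -
  have sub: "B \<subseteq> cross_nbhd n r p A"
    using max unfolding maximal_pair_def cross_nbhd_def r_cross_intersecting_def by auto
  have "A \<subseteq> Sp n p" "cross_nbhd n r p A \<subseteq> Sp n p"
    using max unfolding cross_nbhd_def maximal_pair_def by auto
  moreover have "r_cross_intersecting n r A (cross_nbhd n r p A)"
    unfolding cross_nbhd_def r_cross_intersecting_def by auto
  ultimately have "card A * card (cross_nbhd n r p A) \<le> card A * card B"
    by (rule maximal_pairD[OF max])
  moreover have "card A > 0" using maximal_pair_card_pos[OF assms] by simp
  ultimately have "card (cross_nbhd n r p A) \<le> card B" by simp
  moreover have "finite (cross_nbhd n r p A)"
    using Sp_finite unfolding cross_nbhd_def by auto
  ultimately show ?thesis using sub by (meson card_seteq)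
qed

text \<open>Passing to the cross-neighbourhood preserves irrelevance of a coordinate: if y meets
  every member of A in r places, so does any y' differing from y only at coordinate i,
  because x with coordinate i changed to avoid y i also lies in A.\<close>

lemma irrelevant_coord_cross_nbhd:
  assumes AS: "A \<subseteq> Sp n p" and sv: "size_vector n p" and i: "i \<in> {1..n}"
    and irr: "irrelevant_coord n p A i"
  shows "irrelevant_coord n p (cross_nbhd n r p A) i"
  unfolding irrelevant_coord_def
proof (intro ballI impI)
  fix y y' assume y: "y \<in> Sp n p" and y': "y' \<in> Sp n p"
    and agree: "\<forall>j\<in>{1..n}. j \<noteq> i \<longrightarrow> y j = y' j" and yN: "y \<in> cross_nbhd n r p A"
  show "y' \<in> cross_nbhd n r p A" unfolding cross_nbhd_def
  proof (intro CollectI conjI ballI y')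
    fix x assume xA: "x \<in> A"
    define x' where "x' = x(i := other_value (y i))"
    have xS: "x \<in> Sp n p" using xA AS by auto
    have "y i \<in> {1..p i}" using y i unfolding Sp_def by auto
    hence o: "other_value (y i) \<in> {1..p i} \<and> other_value (y i) \<noteq> y i"
      using other_value sv i unfolding size_vector_def by blast
    have x'S: "x' \<in> Sp n p"
      using PiE_fun_upd[of "other_value (y i)" "\<lambda>i. {1..p i}" i x "{1..n}"] xS o i
      unfolding Sp_def x'_def by (simp add: insert_absorb)
    have "x' \<in> A"
      using irr[unfolded irrelevant_coord_def, rule_format, OF xS x'S _ xA] by (simp add: x'_def)
    hence "r \<le> card {j\<in>{1..n}. x' j = y j}"
      using yN unfolding cross_nbhd_def r_intersecting_def by auto
    moreover have "{j\<in>{1..n}. x' j = y j} \<subseteq> {j\<in>{1..n}. x j = y' j}"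
      using agree o unfolding x'_def by auto
    hence "card {j\<in>{1..n}. x' j = y j} \<le> card {j\<in>{1..n}. x j = y' j}"
      by (intro card_mono) auto
    ultimately show "r_intersecting n r x y'" unfolding r_intersecting_def by linarith
  qed
qed

lemma maximal_pair_relevant_coords:
  assumes max: "maximal_pair n p r A B" and sv: "size_vector n p" and "r \<le> n"
  shows "relevant_coords n p A = relevant_coords n p B"
proof -
  have BN: "B = cross_nbhd n r p A" and AN: "A = cross_nbhd n r p B"
    using maximal_pair_cross_nbhd maximal_pair_sym assms by blast+
  have "A \<subseteq> Sp n p" "B \<subseteq> Sp n p" using max unfolding maximal_pair_def by auto
  hence "irrelevant_coord n p A i = irrelevant_coord n p B i" if "i \<in> {1..n}" for i
    using irrelevant_coord_cross_nbhd[OF _ sv that] BN AN by metis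
  thus ?thesis unfolding relevant_coords_def by auto
qed

section \<open>Cross-neighbourhoods of Hamming balls\<close>

text \<open>Two vectors within distances l and m of x0 on T agree with x0, hence with each other,
  on at least |T| - l - m coordinates of T.\<close>

lemma hamming_close_r_intersecting:
  assumes T: "T \<subseteq> {1..n}" and x: "card {i\<in>T. x i \<noteq> x0 i} \<le> l"
    and y: "card {i\<in>T. y i \<noteq> x0 i} \<le> m" and lmr: "l + m + r \<le> card T"
  shows "r_intersecting n r x y"
proof -
  have fT: "finite T" using T finite_subset by blast
  have "{i\<in>T. y i = x0 i} \<subseteq> {i\<in>{1..n}. x i = y i} \<union> {i\<in>T. x i \<noteq> x0 i}" using T by auto
  hence "card {i\<in>T. y i = x0 i} \<le> card ({i\<in>{1..n}. x i = y i} \<union> {i\<in>T. x i \<noteq> x0 i})"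
    using fT by (intro card_mono) auto
  also have "\<dots> \<le> card {i\<in>{1..n}. x i = y i} + card {i\<in>T. x i \<noteq> x0 i}" by (rule card_Un_le)
  finally have "card {i\<in>T. y i = x0 i} \<le> card {i\<in>{1..n}. x i = y i} + l" using x by linarith
  moreover have "card {i\<in>T. y i = x0 i} + card {i\<in>T. y i \<noteq> x0 i} = card T"
    using card_filter_split[OF fT] .
  ultimately show ?thesis unfolding r_intersecting_def using y lmr by linarith
qed

lemma hamming_balls_cross_intersecting:
  "T \<subseteq> {1..n} \<Longrightarrow> l + m + r \<le> card T \<Longrightarrow>
   r_cross_intersecting n r (hamming_ball n p T x0 l) (hamming_ball n p T x0 m)"
  unfolding r_cross_intersecting_def hamming_ball_def
  using hamming_close_r_intersecting by blast

lemma maximal_pair_ge_ball_pair: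
  assumes "maximal_pair n p r A B" "T \<subseteq> {1..n}" "l + m + r \<le> card T"
  shows "card (hamming_ball n p T x0 l) * card (hamming_ball n p T x0 m) \<le> card A * card B"
  using maximal_pairD[OF assms(1) _ _ hamming_balls_cross_intersecting[OF assms(2,3)]]
  unfolding hamming_ball_def by auto

text \<open>Conversely, if y meets every vector within distance l of x0 on T in r places, then y
  is within distance |T| - l - r of x0 on T: otherwise change l of the coordinates of T where
  y agrees with x0, and all coordinates outside T, to values different from y; the
  resulting vector is in the ball but agrees with y in fewer than r places.\<close>

lemma cross_nbhd_hamming_ball_bound:
  assumes T: "T \<subseteq> {1..n}" and x0: "x0 \<in> Sp n p" and sv: "size_vector n p" and r: "1 \<le> r"
    and y: "y \<in> Sp n p" and all: "\<forall>x\<in>hamming_ball n p T x0 l. r_intersecting n r x y"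
  shows "card {i\<in>T. y i \<noteq> x0 i} + l + r \<le> card T"
proof (rule ccontr)
  assume contra: "\<not> ?thesis"
  have fT: "finite T" using T finite_subset by blast
  define Y where "Y = {i\<in>T. y i = x0 i}"
  have cY: "card Y + card {i\<in>T. y i \<noteq> x0 i} = card T"
    unfolding Y_def using card_filter_split[OF fT] .
  have fY: "finite Y" unfolding Y_def using fT by auto
  obtain L where L: "L \<subseteq> Y" "card L = min l (card Y)"
    using obtain_subset_with_card_n[of "min l (card Y)" Y] by auto
  define x where "x = restrict (\<lambda>i. if i \<in> L \<or> i \<notin> T then other_value (y i) else x0 i) {1..n}"
  have o: "other_value (y i) \<in> {1..p i} \<and> other_value (y i) \<noteq> y i" if "i \<in> {1..n}" for i
    using other_value y sv that unfolding Sp_def size_vector_def by blast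
  have xS: "x \<in> Sp n p" using o x0 unfolding Sp_def x_def by auto
  have "{i\<in>T. x i \<noteq> x0 i} = L"
  proof (intro equalityI subsetI)
    fix i assume "i \<in> {i\<in>T. x i \<noteq> x0 i}"
    thus "i \<in> L" using T unfolding x_def by (auto split: if_splits)
  next
    fix i assume iL: "i \<in> L"
    hence "i \<in> T" "y i = x0 i" using L unfolding Y_def by auto
    thus "i \<in> {i\<in>T. x i \<noteq> x0 i}" using o[of i] T iL unfolding x_def by auto
  qed
  hence "x \<in> hamming_ball n p T x0 l" unfolding hamming_ball_def using xS L by auto
  hence agree: "r \<le> card {i\<in>{1..n}. x i = y i}" using all unfolding r_intersecting_def by auto
  have "{i\<in>{1..n}. x i = y i} \<subseteq> Y - L" unfolding Y_def x_def using o by auto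
  hence "card {i\<in>{1..n}. x i = y i} \<le> card (Y - L)" using fY by (intro card_mono) auto
  also have "\<dots> = card Y - card L" using L fY by (simp add: card_Diff_subset finite_subset)
  finally show False using agree L cY contra r by linarith
qed

lemma cross_nbhd_hamming_ball:
  assumes T: "T \<subseteq> {1..n}" and x0: "x0 \<in> Sp n p" and sv: "size_vector n p" and r: "1 \<le> r"
  shows "cross_nbhd n r p (hamming_ball n p T x0 l)
       = {y\<in>Sp n p. card {i\<in>T. y i \<noteq> x0 i} + l + r \<le> card T}"
proof (intro equalityI subsetI)
  fix y assume "y \<in> cross_nbhd n r p (hamming_ball n p T x0 l)"
  thus "y \<in> {y\<in>Sp n p. card {i\<in>T. y i \<noteq> x0 i} + l + r \<le> card T}"
    using cross_nbhd_hamming_ball_bound[OF T x0 sv r] unfolding cross_nbhd_def by auto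
next
  fix y assume "y \<in> {y\<in>Sp n p. card {i\<in>T. y i \<noteq> x0 i} + l + r \<le> card T}"
  thus "y \<in> cross_nbhd n r p (hamming_ball n p T x0 l)"
    using hamming_close_r_intersecting[OF T, of _ x0 l y "card {i\<in>T. y i \<noteq> x0 i}" r]
    unfolding cross_nbhd_def hamming_ball_def by auto
qed

lemma maximal_pair_ball_partner:
  assumes max: "maximal_pair n p r A B" and sv: "size_vector n p" and r: "1 \<le> r" "r \<le> n"
    and T: "T \<subseteq> {1..n}" and x0: "x0 \<in> Sp n p" and A: "A = hamming_ball n p T x0 l"
  shows "l + r \<le> card T" and "B = hamming_ball n p T x0 (card T - l - r)"
proof -
  have B: "B = {y\<in>Sp n p. card {i\<in>T. y i \<noteq> x0 i} + l + r \<le> card T}"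
    using maximal_pair_cross_nbhd[OF max sv r(2)] cross_nbhd_hamming_ball[OF T x0 sv r(1)] A
    by simp
  show "l + r \<le> card T"
  proof (rule ccontr)
    assume "\<not> l + r \<le> card T"
    hence "B = {}" using B by auto
    thus False using maximal_pair_card_pos[OF max sv r(2)] by simp
  qed
  thus "B = hamming_ball n p T x0 (card T - l - r)"
    unfolding B hamming_ball_def by auto
qed

section \<open>Counting Hamming balls\<close>

text \<open>The weight of the radius-k ball in the coordinates T: each disagreement set S with
  |S| <= k contributes prod_{i in S} (p_i - 1) vectors on T.\<close>

definition ball_weight :: "(nat \<Rightarrow> nat) \<Rightarrow> nat set \<Rightarrow> nat \<Rightarrow> nat" where
  "ball_weight p T k = (\<Sum>S\<in>{S. S \<subseteq> T \<and> card S \<le> k}. \<Prod>i\<in>S. (p i - 1))"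

text \<open>The vectors whose disagreement set with x0 on T is exactly S form a product set.\<close>

lemma card_disagreement_slice:
  assumes T: "T \<subseteq> {1..n}" and x0: "x0 \<in> Sp n p" and S: "S \<subseteq> T"
  shows "card {x\<in>Sp n p. {i\<in>T. x i \<noteq> x0 i} = S} = (\<Prod>i\<in>S. (p i - 1)) * (\<Prod>i\<in>{1..n}-T. p i)"
proof -
  define F where
    "F i = (if i \<in> S then {1..p i} - {x0 i} else if i \<in> T then {x0 i} else {1..p i})" for i
  have x0i: "\<And>i. i \<in> {1..n} \<Longrightarrow> x0 i \<in> {1..p i}" using x0 unfolding Sp_def by auto
  have eq: "{x\<in>Sp n p. {i\<in>T. x i \<noteq> x0 i} = S} = PiE {1..n} F"
  proof (intro equalityI subsetI)
    fix x assume "x \<in> {x\<in>Sp n p. {i\<in>T. x i \<noteq> x0 i} = S}"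
    hence xS: "x \<in> Sp n p" and D: "{i\<in>T. x i \<noteq> x0 i} = S" by auto
    have "x i \<in> F i" if i: "i \<in> {1..n}" for i
    proof -
      have "x i \<in> {1..p i}" using xS i unfolding Sp_def by auto
      thus ?thesis using D S unfolding F_def by auto
    qed
    moreover have "x \<in> extensional {1..n}" using xS unfolding Sp_def by (simp add: PiE_iff)
    ultimately show "x \<in> PiE {1..n} F" by (simp add: PiE_iff)
  next
    fix x assume x: "x \<in> PiE {1..n} F"
    have "x \<in> Sp n p" unfolding Sp_def using x x0i unfolding F_def PiE_iff by (auto split: if_splits)
    moreover have "{i\<in>T. x i \<noteq> x0 i} = S"
      using x T S unfolding F_def PiE_iff by (auto split: if_splits)
    ultimately show "x \<in> {x\<in>Sp n p. {i\<in>T. x i \<noteq> x0 i} = S}" by simp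
  qed
  have fT: "finite T" using T finite_subset by blast
  have "card (PiE {1..n} F) = (\<Prod>i\<in>{1..n}. card (F i))" by (simp add: card_PiE)
  also have "\<dots> = (\<Prod>i\<in>{1..n}-T. card (F i)) * (\<Prod>i\<in>T. card (F i))"
    by (rule prod.subset_diff[OF T finite_atLeastAtMost])
  also have "(\<Prod>i\<in>T. card (F i)) = (\<Prod>i\<in>T-S. card (F i)) * (\<Prod>i\<in>S. card (F i))"
    by (rule prod.subset_diff[OF S fT])
  also have "(\<Prod>i\<in>T-S. card (F i)) = 1" unfolding F_def by simp
  also have "(\<Prod>i\<in>S. card (F i)) = (\<Prod>i\<in>S. (p i - 1))"
    using x0i S T unfolding F_def by (intro prod.cong) auto
  also have "(\<Prod>i\<in>{1..n}-T. card (F i)) = (\<Prod>i\<in>{1..n}-T. p i)"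
    using S unfolding F_def by (intro prod.cong) auto
  finally show ?thesis using eq by simp
qed

text \<open>Summing over the possible disagreement sets, the ball of radius k in T has
  W_T(k) * prod_{j not in T} p_j elements.\<close>

lemma card_hamming_ball:
  assumes T: "T \<subseteq> {1..n}" and x0: "x0 \<in> Sp n p"
  shows "card (hamming_ball n p T x0 k) = ball_weight p T k * (\<Prod>i\<in>{1..n}-T. p i)"
proof -
  have fT: "finite T" using T finite_subset by blast
  define I where "I = {S. S \<subseteq> T \<and> card S \<le> k}"
  define C where "C S = {x\<in>Sp n p. {i\<in>T. x i \<noteq> x0 i} = S}" for S
  have "hamming_ball n p T x0 k = (\<Union>S\<in>I. C S)"
    unfolding hamming_ball_def I_def C_def by auto
  moreover have "card (\<Union>S\<in>I. C S) = (\<Sum>S\<in>I. card (C S))"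
    using fT unfolding I_def
    by (intro card_UN_disjoint) (auto simp: C_def intro: finite_subset[OF _ Sp_finite])
  moreover have "\<dots> = (\<Sum>S\<in>I. (\<Prod>i\<in>S. (p i - 1)) * (\<Prod>i\<in>{1..n}-T. p i))"
    using card_disagreement_slice[OF T x0] unfolding C_def I_def by (intro sum.cong) auto
  ultimately show ?thesis unfolding ball_weight_def I_def by (simp add: sum_distrib_right)
qed

text \<open>Only the empty disagreement set has size 0.\<close>

lemma ball_weight_zero: "finite T \<Longrightarrow> ball_weight p T 0 = 1"
proof -
  assume "finite T"
  hence "{S. S \<subseteq> T \<and> card S \<le> 0} = {{}}" using finite_subset by (fastforce simp: card_eq_0_iff)
  thus ?thesis unfolding ball_weight_def by simp
qed

text \<open>The empty disagreement set alone contributes 1.\<close>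

lemma ball_weight_pos: "finite T \<Longrightarrow> 1 \<le> ball_weight p T k"
proof -
  assume "finite T"
  hence "(\<Sum>S\<in>{{}}. \<Prod>i\<in>S. (p i - 1)) \<le> ball_weight p T k"
    unfolding ball_weight_def by (intro sum_mono2) auto
  thus ?thesis by simp
qed

text \<open>Pascal-type recursion: split the disagreement sets by whether they contain i.\<close>

lemma ball_weight_insert:
  assumes R: "finite R" and i: "i \<notin> R"
  shows "ball_weight p (insert i R) (Suc k) = ball_weight p R (Suc k) + (p i - 1) * ball_weight p R k"
proof -
  define I1 where "I1 = {S. S \<subseteq> R \<and> card S \<le> Suc k}"
  define I2 where "I2 = {S. S \<subseteq> R \<and> card S \<le> k}"
  have split: "{S. S \<subseteq> insert i R \<and> card S \<le> Suc k} = I1 \<union> insert i ` I2"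
  proof (intro equalityI subsetI)
    fix S assume S: "S \<in> {S. S \<subseteq> insert i R \<and> card S \<le> Suc k}"
    show "S \<in> I1 \<union> insert i ` I2"
    proof (cases "i \<in> S")
      case True
      have fS: "finite S" using S R by (auto intro: finite_subset)
      have "S = insert i (S - {i})" using True by auto
      moreover have "S - {i} \<in> I2" using S True fS unfolding I2_def by (auto simp: card_Diff_singleton)
      ultimately show ?thesis by blast
    next
      case False thus ?thesis using S unfolding I1_def by auto
    qed
  next
    fix S assume "S \<in> I1 \<union> insert i ` I2"
    thus "S \<in> {S. S \<subseteq> insert i R \<and> card S \<le> Suc k}" unfolding I1_def I2_def
      using R by (auto intro: finite_subset card_insert_le_m1)
  qed
  have fin: "finite I1" "finite I2" unfolding I1_def I2_def using R by auto
  have disj: "I1 \<inter> insert i ` I2 = {}" unfolding I1_def I2_def using i by auto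
  have inj: "inj_on (insert i) I2"
    unfolding I2_def inj_on_def using i by (metis (mono_tags) insert_ident mem_Collect_eq subsetD)
  have "ball_weight p (insert i R) (Suc k)
      = (\<Sum>S\<in>I1. \<Prod>j\<in>S. (p j - 1)) + (\<Sum>S\<in>insert i ` I2. \<Prod>j\<in>S. (p j - 1))"
    unfolding ball_weight_def split using fin disj by (simp add: sum.union_disjoint)
  also have "(\<Sum>S\<in>insert i ` I2. \<Prod>j\<in>S. (p j - 1)) = (\<Sum>S\<in>I2. \<Prod>j\<in>insert i S. (p j - 1))"
    using sum.reindex[OF inj] by simp
  also have "\<dots> = (\<Sum>S\<in>I2. (p i - 1) * (\<Prod>j\<in>S. (p j - 1)))"
    using R i unfolding I2_def
    by (intro sum.cong refl) (metis (no_types, lifting) mem_Collect_eq prod.insert rev_finite_subset subsetD)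
  also have "\<dots> = (p i - 1) * ball_weight p R k" unfolding ball_weight_def I2_def by (simp add: sum_distrib_left)
  finally show ?thesis unfolding ball_weight_def I1_def by simp
qed

text \<open>When every p_i >= 2, the weight grows strictly up to radius |T|: a disagreement set of
  size exactly k + 1 contributes at least 1.\<close>

lemma ball_weight_strict_mono:
  assumes fT: "finite T" and p: "\<forall>i\<in>T. 2 \<le> p i" and k: "Suc k \<le> card T"
  shows "ball_weight p T k < ball_weight p T (Suc k)"
proof -
  obtain S0 where S0: "S0 \<subseteq> T" "card S0 = Suc k" using obtain_subset_with_card_n[OF k] by auto
  define I where "I k = {S. S \<subseteq> T \<and> card S \<le> k}" for k
  have sub: "I k \<subseteq> I (Suc k)" and fin: "finite (I (Suc k))" using fT unfolding I_def by auto
  have "ball_weight p T (Suc k) = (\<Sum>S\<in>I (Suc k) - I k. \<Prod>i\<in>S. (p i - 1)) + ball_weight p T k"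
    unfolding ball_weight_def I_def[symmetric] by (rule sum.subset_diff[OF sub fin])
  moreover have "(\<Sum>S\<in>{S0}. \<Prod>i\<in>S. (p i - 1)) \<le> (\<Sum>S\<in>I (Suc k) - I k. \<Prod>i\<in>S. (p i - 1))"
    using S0 fin unfolding I_def by (intro sum_mono2) auto
  moreover have "1 \<le> (\<Prod>i\<in>S0. (p i - 1))" using p S0 by (intro prod_ge_1) force
  ultimately show ?thesis by simp
qed

section \<open>Log-concavity of the ball weights\<close>

text \<open>One step of the log-concavity induction: if B is log-concave (at the indices
  shown) and q >= 1, then so is the sequence C_k = B_k + q B_(k-1); strictly if B is.\<close>

lemma log_concave_step:
  fixes B0 B1 B2 B3 q :: real
  assumes pos: "B0 > 0" "B1 > 0" "B2 > 0" "B3 > 0" "q \<ge> 1"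
    and lc1: "B0 * B2 \<le> B1^2" and lc2: "B1 * B3 \<le> B2^2"
  shows "(B1 + q*B0) * (B3 + q*B2) \<le> (B2 + q*B1)^2"
    and "B0 * B2 < B1^2 \<Longrightarrow> (B1 + q*B0) * (B3 + q*B2) < (B2 + q*B1)^2"
proof -
  have "(B0*B2) * (B1*B3) \<le> B1^2 * B2^2"
    using lc1 lc2 pos by (intro mult_mono) auto
  hence "(B0*B3) * (B1*B2) \<le> (B1*B2) * (B1*B2)" by (simp add: algebra_simps power2_eq_square)
  hence mid: "B0*B3 \<le> B1*B2" using pos by (meson mult_le_cancel_right_pos mult_pos_pos)
  have expand: "(B2 + q*B1)^2 - (B1 + q*B0) * (B3 + q*B2)
      = (B2^2 - B1*B3) + q*(B1*B2 - B0*B3) + q^2*(B1^2 - B0*B2)"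
    by (simp add: algebra_simps power2_eq_square)
  have t1: "0 \<le> B2^2 - B1*B3" and t2: "0 \<le> q*(B1*B2 - B0*B3)" and t3: "0 \<le> q^2*(B1^2 - B0*B2)"
    using lc1 lc2 mid pos by auto
  show "(B1 + q*B0) * (B3 + q*B2) \<le> (B2 + q*B1)^2" using expand t1 t2 t3 by linarith
  assume "B0 * B2 < B1^2"
  hence "0 < q^2*(B1^2 - B0*B2)" using pos by simp
  thus "(B1 + q*B0) * (B3 + q*B2) < (B2 + q*B1)^2" using expand t1 t2 by linarith
qed

text \<open>The first index, where the shifted sequence starts with B_(-1) = 0 and B_0 = 1.\<close>

lemma log_concave_step_base:
  fixes b1 b2 q :: real
  assumes "b1 \<ge> 1" "q \<ge> 1" "b2 \<le> b1^2"
  shows "b2 + q*b1 < (b1 + q)^2"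
proof -
  have "(b1 + q)^2 = b1^2 + 2*q*b1 + q^2" by (simp add: algebra_simps power2_eq_square)
  moreover have "1*1 \<le> q*b1" using assms by (intro mult_mono) auto
  moreover have "q^2 > 0" using assms by simp
  ultimately show ?thesis using assms by linarith
qed

text \<open>The ball weights are log-concave, strictly so below the full radius |T|: induction on T
  via the recursion of ball_weight_insert.\<close>

lemma ball_weight_log_concave:
  assumes "finite T" "\<forall>i\<in>T. 2 \<le> p i"
  shows "\<forall>k. real (ball_weight p T k) * real (ball_weight p T (Suc (Suc k))) \<le> (real (ball_weight p T (Suc k)))^2
           \<and> (Suc k < card T \<longrightarrow>
              real (ball_weight p T k) * real (ball_weight p T (Suc (Suc k))) < (real (ball_weight p T (Suc k)))^2)"
  using assms
proof (induction T rule: finite_induct)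
  case empty
  have empty: "{S. S \<subseteq> {} \<and> card S \<le> k} = {{}}" for k by auto
  have "ball_weight p {} k = 1" for k unfolding ball_weight_def empty by simp
  thus ?case by simp
next
  case (insert i R)
  define b where "b k = real (ball_weight p R k)" for k
  define c where "c k = real (ball_weight p (insert i R) k)" for k
  define q where "q = real (p i - 1)"
  have q1: "q \<ge> 1" using insert.prems unfolding q_def by force
  have cS: "\<And>k. c (Suc k) = b (Suc k) + q * b k" unfolding b_def c_def q_def
    using ball_weight_insert[OF insert.hyps] by simp
  have c0: "c 0 = 1" "b 0 = 1" unfolding b_def c_def using ball_weight_zero insert.hyps by auto
  have bpos: "\<And>k. b k \<ge> 1" unfolding b_def using ball_weight_pos[OF insert.hyps(1)] by simp
  have IH: "\<And>k. b k * b (Suc (Suc k)) \<le> (b (Suc k))^2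
              \<and> (Suc k < card R \<longrightarrow> b k * b (Suc (Suc k)) < (b (Suc k))^2)"
    using insert.IH insert.prems unfolding b_def by blast
  have "c k * c (Suc (Suc k)) \<le> (c (Suc k))^2
        \<and> (Suc k < card (insert i R) \<longrightarrow> c k * c (Suc (Suc k)) < (c (Suc k))^2)" for k
  proof (cases k)
    case 0
    have "b 2 \<le> (b 1)^2" using IH[of 0] c0 by (simp add: numeral_2_eq_2)
    hence "b 2 + q * b 1 < (b 1 + q)^2" using log_concave_step_base bpos q1 by blast
    hence "c 0 * c 2 < (c 1)^2" using cS[of 1] cS[of 0] c0 by (simp add: numeral_2_eq_2)
    thus ?thesis using 0 by (simp add: numeral_2_eq_2)
  next
    case (Suc k')
    have pos: "b k' > 0" "b (Suc k') > 0" "b (Suc (Suc k')) > 0" "b (Suc (Suc (Suc k'))) > 0"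
      using bpos by (auto intro: less_le_trans[OF zero_less_one])
    have "card (insert i R) = Suc (card R)" using insert.hyps by simp
    thus ?thesis
      using log_concave_step[OF pos q1, OF conjunct1[OF IH[of k']] conjunct1[OF IH[of "Suc k'"]]]
        IH[of k'] Suc cS by auto
  qed
  thus ?case unfolding c_def by blast
qed

lemma log_concave_exchange:
  fixes E :: "nat \<Rightarrow> real"
  assumes pos: "\<And>k. E k > 0"
    and lc: "\<And>k. Suc k < t \<Longrightarrow> E k * E (Suc (Suc k)) < (E (Suc k))^2"
    and ab: "a + 2 \<le> b" and bt: "b \<le> t"
  shows "E a * E b < E (Suc a) * E (b - 1)"
proof -
  have chain: "a + Suc j < t \<Longrightarrow> E a * E (a + Suc (Suc j)) < E (Suc a) * E (a + Suc j)" for j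
  proof (induction j)
    case 0
    thus ?case using lc[of a] by (simp add: power2_eq_square)
  next
    case (Suc j)
    have h1: "E a * E (a + Suc (Suc j)) < E (Suc a) * E (a + Suc j)" using Suc by simp
    have h2: "E (a + Suc j) * E (a + Suc (Suc (Suc j))) < E (a + Suc (Suc j)) * E (a + Suc (Suc j))"
      using lc[of "a + Suc j"] Suc.prems by (simp add: power2_eq_square)
    have "(E a * E (a + Suc (Suc j))) * (E (a + Suc j) * E (a + Suc (Suc (Suc j))))
        < (E (Suc a) * E (a + Suc j)) * (E (a + Suc (Suc j)) * E (a + Suc (Suc j)))"
      by (rule mult_strict_mono[OF h1 h2]) (simp_all add: pos less_imp_le)
    hence "(E a * E (a + Suc (Suc (Suc j)))) * (E (a + Suc j) * E (a + Suc (Suc j)))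
        < (E (Suc a) * E (a + Suc (Suc j))) * (E (a + Suc j) * E (a + Suc (Suc j)))"
      by (simp add: algebra_simps)
    hence "E a * E (a + Suc (Suc (Suc j))) < E (Suc a) * E (a + Suc (Suc j))"
      using pos by (meson mult_less_cancel_right_pos mult_pos_pos)
    thus ?case by simp
  qed
  obtain j where "b = a + Suc (Suc j)" using ab by (metis add_2_eq_Suc' le_add_diff_inverse add.commute add_Suc_right)
  thus ?thesis using chain[of j] bt by simp
qed

lemma ball_weight_swap:
  assumes R: "finite R" and p: "\<forall>x\<in>insert j R. 2 \<le> p x" and ij: "i \<notin> R" "j \<notin> R"
    and pij: "p j < p i" and k: "k \<le> card R"
  shows "real (ball_weight p (insert i R) k) * real (p j) < real (ball_weight p (insert j R) k) * real (p i)"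
proof (cases k)
  case 0
  thus ?thesis using ball_weight_zero R pij by simp
next
  case (Suc k')
  define b0 where "b0 = real (ball_weight p R k')"
  define b1 where "b1 = real (ball_weight p R (Suc k'))"
  have "b0 < b1" using ball_weight_strict_mono[OF R] p k Suc unfolding b0_def b1_def by simp
  hence gain: "0 < (real (p i) - real (p j)) * (b1 - b0)" using pij by simp
  have "p j \<ge> 1" using p by auto
  hence Wi: "real (ball_weight p (insert i R) k) = b1 + (real (p i) - 1) * b0"
    and Wj: "real (ball_weight p (insert j R) k) = b1 + (real (p j) - 1) * b0"
    using ball_weight_insert[OF R ij(1)] ball_weight_insert[OF R ij(2)] Suc pij
    unfolding b0_def b1_def by (simp_all add: of_nat_diff)
  have "(b1 + (real (p j) - 1) * b0) * real (p i) - (b1 + (real (p i) - 1) * b0) * real (p j)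
      = (real (p i) - real (p j)) * (b1 - b0)" by (simp add: algebra_simps)
  thus ?thesis unfolding Wi Wj using gain by linarith
qed

section \<open>Maximal pairs of concentric balls\<close>

lemma size_vector_ge2: "size_vector n p \<Longrightarrow> T \<subseteq> {1..n} \<Longrightarrow> \<forall>i\<in>T. 2 \<le> p i"
  unfolding size_vector_def by auto

lemma card_hamming_ball_swap:
  assumes T: "T \<subseteq> {1..n}" and x0: "x0 \<in> Sp n p" and sv: "size_vector n p"
    and i: "i \<in> T" and j: "j \<in> {1..n} - T" and pij: "p j < p i" and k: "k < card T"
  shows "card (hamming_ball n p T x0 k) < card (hamming_ball n p (insert j (T - {i})) x0 k)"
proof -
  define R where "R = T - {i}"
  define Q where "Q = (\<Prod>x\<in>{1..n}-T-{j}. p x)"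
  have R: "finite R" "i \<notin> R" "j \<notin> R" "T = insert i R"
    unfolding R_def using T i j finite_subset by auto
  have T': "insert j R \<subseteq> {1..n}" unfolding R_def using T j by auto
  have "(\<Prod>x\<in>{1..n}-T. p x) = p j * Q" unfolding Q_def using j by (intro prod.remove) auto
  hence card_T: "real (card (hamming_ball n p T x0 k)) = real (ball_weight p T k) * real (p j) * real Q"
    using card_hamming_ball[OF T x0] by simp
  have "{1..n} - insert j R - {i} = {1..n} - T - {j}" "i \<in> {1..n} - insert j R"
    unfolding R_def using i T j by auto
  hence "(\<Prod>x\<in>{1..n} - insert j R. p x) = p i * Q"
    unfolding Q_def using prod.remove[of "{1..n} - insert j R" i p] by simp
  hence card_T': "real (card (hamming_ball n p (insert j R) x0 k))
      = real (ball_weight p (insert j R) k) * real (p i) * real Q"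
    using card_hamming_ball[OF T' x0] by simp
  have "k \<le> card R" using k R by simp
  hence "real (ball_weight p T k) * real (p j) < real (ball_weight p (insert j R) k) * real (p i)"
    using ball_weight_swap[OF R(1) _ R(2,3) pij] size_vector_ge2[OF sv T'] R(4) by simp
  moreover have "Q \<ge> 1" unfolding Q_def using sv unfolding size_vector_def by (intro prod_ge_1) force
  ultimately have "real (card (hamming_ball n p T x0 k)) < real (card (hamming_ball n p (insert j R) x0 k))"
    unfolding card_T card_T' by (intro mult_strict_right_mono) auto
  thus ?thesis unfolding R_def by (simp only: of_nat_less_iff)
qed

text \<open>In a maximal pair of concentric balls, coordinates in T have no more values than
  coordinates outside T; otherwise the swap above enlarges both balls.\<close>

lemma maximal_balls_sizes_mono:
  assumes max: "maximal_pair n p r (hamming_ball n p T x0 l) (hamming_ball n p T x0 m)"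
    and lmr: "l + m + r = card T" and r: "1 \<le> r"
    and T: "T \<subseteq> {1..n}" and x0: "x0 \<in> Sp n p" and sv: "size_vector n p"
    and i: "i \<in> T" and j: "j \<in> {1..n} - T"
  shows "p i \<le> p j"
proof (rule ccontr)
  assume "\<not> p i \<le> p j"
  hence pij: "p j < p i" by simp
  define T' where "T' = insert j (T - {i})"
  have "finite T" using T finite_subset by blast
  hence "card (T - {i}) = card T - 1" "card T > 0" using i by (auto simp: card_gt_0_iff)
  hence T': "T' \<subseteq> {1..n}" "card T' = card T"
    unfolding T'_def using T i j \<open>finite T\<close> by auto
  have "card (hamming_ball n p T x0 l) < card (hamming_ball n p T' x0 l)"
    and "card (hamming_ball n p T x0 m) < card (hamming_ball n p T' x0 m)"
    using card_hamming_ball_swap[OF T x0 sv i j pij] lmr r unfolding T'_def by auto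
  hence "card (hamming_ball n p T x0 l) * card (hamming_ball n p T x0 m)
       < card (hamming_ball n p T' x0 l) * card (hamming_ball n p T' x0 m)"
    by (intro mult_strict_mono) auto
  moreover have "card (hamming_ball n p T' x0 l) * card (hamming_ball n p T' x0 m)
      \<le> card (hamming_ball n p T x0 l) * card (hamming_ball n p T x0 m)"
    using maximal_pair_ge_ball_pair[OF max T'(1)] lmr T'(2) by simp
  ultimately show False by simp
qed

text \<open>In a maximal pair of concentric balls the radii differ by at most one: otherwise
  moving them towards each other keeps l + m + r = |T| and, by strict log-concavity of the
  ball weights, strictly increases the product of the sizes.\<close>

lemma maximal_balls_radii_close:
  assumes max: "maximal_pair n p r (hamming_ball n p T x0 l) (hamming_ball n p T x0 m)"
    and lmr: "l + m + r = card T" and r: "1 \<le> r"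
    and T: "T \<subseteq> {1..n}" and x0: "x0 \<in> Sp n p" and sv: "size_vector n p"
  shows "m < l + 2"
proof (rule ccontr)
  assume "\<not> m < l + 2"
  hence lm: "l + 2 \<le> m" by simp
  have fT: "finite T" using T finite_subset by blast
  define E where "E k = real (ball_weight p T k)" for k
  define P where "P = real (\<Prod>i\<in>{1..n}-T. p i)"
  have "E l * E m < E (Suc l) * E (m - 1)"
  proof (rule log_concave_exchange[OF _ _ lm])
    show "E k > 0" for k unfolding E_def using ball_weight_pos[OF fT] by (simp add: Suc_le_eq)
    show "E k * E (Suc (Suc k)) < (E (Suc k))^2" if "Suc k < card T" for k
      using ball_weight_log_concave[OF fT size_vector_ge2[OF sv T]] that unfolding E_def by blast
    show "m \<le> card T" using lmr by simp
  qed
  moreover have "(\<Prod>i\<in>{1..n}-T. p i) \<ge> 1" using sv unfolding size_vector_def by (intro prod_ge_1) force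
  hence "P > 0" unfolding P_def by linarith
  ultimately have "E l * E m * (P * P) < E (Suc l) * E (m - 1) * (P * P)"
    by (intro mult_strict_right_mono) auto
  hence gain: "E l * P * (E m * P) < E (Suc l) * P * (E (m - 1) * P)" by (simp only: mult_ac)
  have card_ball: "real (card (hamming_ball n p T x0 k)) = E k * P" for k
    using card_hamming_ball[OF T x0] unfolding E_def P_def by simp
  have "card (hamming_ball n p T x0 (Suc l)) * card (hamming_ball n p T x0 (m - 1))
      \<le> card (hamming_ball n p T x0 l) * card (hamming_ball n p T x0 m)"
    using maximal_pair_ge_ball_pair[OF max T] lmr lm by simp
  hence "real (card (hamming_ball n p T x0 (Suc l))) * real (card (hamming_ball n p T x0 (m - 1)))
      \<le> real (card (hamming_ball n p T x0 l)) * real (card (hamming_ball n p T x0 m))"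
    by (simp only: of_nat_mult[symmetric] of_nat_le_iff)
  thus False unfolding card_ball using gain by linarith
qed

lemma maximal_pair_with_ball:
  assumes max: "maximal_pair n p r A B" and sv: "size_vector n p" and r: "1 \<le> r" "r \<le> n"
    and T: "T \<subseteq> {1..n}" and x0: "x0 \<in> Sp n p" and A_ball: "A = hamming_ball n p T x0 l"
  shows "card T \<ge> l + r \<and> B = hamming_ball n p T x0 (card T - l - r)
       \<and> (\<forall>i\<in>T. \<forall>j\<in>{1..n} - T. p i \<le> p j) \<and> \<bar>int (card T) - 2 * int l - int r\<bar> \<le> 1"
proof -
  define m where "m = card T - l - r"
  have lr: "l + r \<le> card T" and B_ball: "B = hamming_ball n p T x0 m"
    using maximal_pair_ball_partner[OF max sv r T x0 A_ball] unfolding m_def by simp_all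
  have lmr: "l + m + r = card T" and mlr: "m + l + r = card T" using lr unfolding m_def by simp_all
  have max': "maximal_pair n p r (hamming_ball n p T x0 l) (hamming_ball n p T x0 m)"
    using max unfolding A_ball B_ball .
  have "m < l + 2" using maximal_balls_radii_close[OF max' lmr r(1) T x0 sv] .
  moreover have "l < m + 2"
    using maximal_balls_radii_close[OF maximal_pair_sym[OF max'] mlr r(1) T x0 sv] .
  ultimately have "\<bar>int (card T) - 2 * int l - int r\<bar> \<le> 1" using lmr by linarith
  moreover have "\<forall>i\<in>T. \<forall>j\<in>{1..n} - T. p i \<le> p j"
    using maximal_balls_sizes_mono[OF max' lmr r(1) T x0 sv] by blast
  ultimately show ?thesis using lr B_ball unfolding m_def by blast
qed

theorem theorem4:
  fixes n r :: nat and p :: "nat \<Rightarrow> nat" and A B :: "(nat \<Rightarrow> nat) set"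
  assumes "1 \<le> r" and "r \<le> n"
    and "size_vector n p"
    and max: "maximal_pair n p r A B"
  shows "(\<forall>B'. maximal_pair n p r A B' \<longrightarrow> B' = B)
       \<and> (\<forall>A'. maximal_pair n p r A' B \<longrightarrow> A' = A)
       \<and> relevant_coords n p A = relevant_coords n p B
       \<and> (\<forall>T x0 l. T \<subseteq> {1..n} \<longrightarrow> x0 \<in> Sp n p \<longrightarrow> l \<le> card T \<longrightarrow>
            A = hamming_ball n p T x0 l \<longrightarrow>
              card T \<ge> l + r
            \<and> B = hamming_ball n p T x0 (card T - l - r)
            \<and> (\<forall>i\<in>T. \<forall>j\<in>{1..n} - T. p i \<le> p j)
            \<and> \<bar>int (card T) - 2 * int l - int r\<bar> \<le> 1)"
proof -
  note r = assms(1,2) and sv = assms(3)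
  have B: "B = cross_nbhd n r p A" and A: "A = cross_nbhd n r p B"
    using maximal_pair_cross_nbhd[OF max sv r(2)] maximal_pair_cross_nbhd[OF maximal_pair_sym[OF max] sv r(2)]
    by simp_all
  have unique_B: "\<forall>B'. maximal_pair n p r A B' \<longrightarrow> B' = B"
    using maximal_pair_cross_nbhd[OF _ sv r(2)] B by auto
  have unique_A: "\<forall>A'. maximal_pair n p r A' B \<longrightarrow> A' = A"
    using maximal_pair_cross_nbhd[OF maximal_pair_sym sv r(2)] A by auto
  have balls: "\<forall>T x0 l. T \<subseteq> {1..n} \<longrightarrow> x0 \<in> Sp n p \<longrightarrow> l \<le> card T \<longrightarrow>
            A = hamming_ball n p T x0 l \<longrightarrow>
              card T \<ge> l + r \<and> B = hamming_ball n p T x0 (card T - l - r)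
            \<and> (\<forall>i\<in>T. \<forall>j\<in>{1..n} - T. p i \<le> p j) \<and> \<bar>int (card T) - 2 * int l - int r\<bar> \<le> 1"
    using maximal_pair_with_ball[OF max sv r] by blast
  show ?thesis
    by (intro conjI unique_B unique_A maximal_pair_relevant_coords[OF max sv r(2)] balls)
qed

end
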